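(* Let $d\ge2$ and $a\in\mathbb{Z}_n^*$. Then: (1) if $a\ne1$, then $|\mathrm{Fix}(a,\mathcal{Y}_{\mathrm{gen}})|\le n^{d-1}$; (2) if $a^2\ne1$, then $|\mathrm{Fix}(a,\mathcal{Y}_{\mathrm{gen}})|\le n^{d-2}$.
   Context: $\mathcal{Y}_{\mathrm{gen}}$ is the set of $d$-element subsets of $\mathbb{Z}_n$ that generate $\mathbb{Z}_n$. The unit group $\mathbb{Z}_n^*$ acts on it by $A\mapsto aA=\{ax:x\in A\}$, and $\mathrm{Fix}(a,\mathcal{Y}_{\mathrm{gen}})=\{A\in\mathcal{Y}_{\mathrm{gen}}:aA=A\}$. *)

theory Defs
  imports Main
begin

definition Zn :: "nat \<Rightarrow> nat set" where
  "Zn n = {0..<n}"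

definition units_Zn :: "nat \<Rightarrow> nat set" where
  "units_Zn n = {a \<in> Zn n. coprime a n}"

definition gen_subgroup :: "nat \<Rightarrow> nat set \<Rightarrow> nat set" where
  "gen_subgroup n A = {nat ((\<Sum>x\<in>A. c x * int x) mod int n) | c. True}"

definition generates :: "nat \<Rightarrow> nat set \<Rightarrow> bool" where
  "generates n A \<longleftrightarrow> gen_subgroup n A = Zn n"

definition Y_gen :: "nat \<Rightarrow> nat \<Rightarrow> nat set set" where
  "Y_gen n d = {A. A \<subseteq> Zn n \<and> card A = d \<and> generates n A}"

definition smul :: "nat \<Rightarrow> nat \<Rightarrow> nat set \<Rightarrow> nat set" where
  "smul n a A = (\<lambda>x. (a * x) mod n) ` A"

definition Fix :: "nat \<Rightarrow> nat \<Rightarrow> nat \<Rightarrow> nat set set" where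
  "Fix n d a = {A \<in> Y_gen n d. smul n a A = A}"

end

theory Submission
  imports Defs "HOL-Number_Theory.Cong"
begin

text \<open>If a unit \<open>a\<close> fixes a generating set \<open>A\<close> then, unless \<open>a\<close> is the identity, some
  \<open>x \<in> A\<close> is moved and \<open>A\<close> contains the orbit segment \<open>x, ax\<close>; unless \<open>a\<^sup>2 = 1\<close>, some
  \<open>x \<in> A\<close> is moved by \<open>a\<^sup>2\<close> and \<open>A\<close> contains the three distinct points \<open>x, ax, a\<^sup>2x\<close>.
  A fixed set is therefore determined by one point of \<open>\<int>\<^sub>n\<close> together with the remaining
  \<open>d - 2\<close> (resp. \<open>d - 3\<close>) elements, which gives the bounds \<open>n \<cdot> n\<^bsup>d-2\<^esup>\<close> and \<open>n \<cdot> n\<^bsup>d-3\<^esup>\<close>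
  (and no fixed sets at all when \<open>d = 2 < 3\<close>).\<close>

lemma card_subsets_of_card_le_pow:
  assumes "finite U"
  shows "card {B. B \<subseteq> U \<and> card B = k} \<le> card U ^ k"
proof -
  have "card {B. B \<subseteq> U \<and> card B = k} = card U choose k"
    using n_subsets[OF assms] by simp
  also have "\<dots> \<le> (card U choose k) * fact k" by simp
  also have "\<dots> \<le> card U ^ k" by (rule binomial_fact_pow)
  finally show ?thesis .
qed

lemma card_family_le_pow_if_members_contain_anchored_set:
  fixes F :: "'a set set" and S :: "'a \<Rightarrow> 'a set"
  assumes "finite U" and "k \<ge> 1"
    and members: "\<And>A. A \<in> F \<Longrightarrow> A \<subseteq> U \<and> card A = d"
    and anchored: "\<And>A. A \<in> F \<Longrightarrow> \<exists>x\<in>U. S x \<subseteq> A \<and> card (S x) = k"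
  shows "card F \<le> card U ^ (d + 1 - k)"
proof (cases "k \<le> d")
  case True
  let ?Bs = "{B. B \<subseteq> U \<and> card B = d - k}"
  have "finite ?Bs" by (rule finite_subset[of _ "Pow U"]) (use \<open>finite U\<close> in auto)
  then have fin: "finite (U \<times> ?Bs)" using \<open>finite U\<close> by simp
  have "F \<subseteq> (\<lambda>(x, B). S x \<union> B) ` (U \<times> ?Bs)"
  proof
    fix A assume A_in: "A \<in> F"
    obtain x where x: "x \<in> U" "S x \<subseteq> A" "card (S x) = k"
      using anchored[OF A_in] by blast
    have A: "A \<subseteq> U" "card A = d" using members[OF A_in] by simp_all
    have "finite A" using A(1) \<open>finite U\<close> by (rule finite_subset)
    then have "card (A - S x) = d - k" using x(2,3) A(2) by (simp add: card_Diff_subset finite_subset)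
    then have "A - S x \<in> ?Bs" using A(1) by blast
    moreover have "A = S x \<union> (A - S x)" using x(2) by blast
    ultimately show "A \<in> (\<lambda>(x, B). S x \<union> B) ` (U \<times> ?Bs)" using x(1) by blast
  qed
  then have "card F \<le> card ((\<lambda>(x, B). S x \<union> B) ` (U \<times> ?Bs))"
    using fin by (intro card_mono) simp_all
  also have "\<dots> \<le> card (U \<times> ?Bs)" using fin by (rule card_image_le)
  also have "\<dots> \<le> card U * card U ^ (d - k)"
    using card_subsets_of_card_le_pow[OF \<open>finite U\<close>] by (simp add: card_cartesian_product)
  also have "\<dots> = card U ^ (d + 1 - k)"
    using True \<open>k \<ge> 1\<close> by (simp add: Suc_diff_le flip: power_Suc)
  finally show ?thesis .
next
  case False
  have "A \<notin> F" for A
  proof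
    assume A_in: "A \<in> F"
    obtain x where "S x \<subseteq> A" "card (S x) = k" using anchored[OF A_in] by blast
    moreover have "finite A" using members[OF A_in] \<open>finite U\<close> finite_subset by blast
    ultimately have "k \<le> card A" using card_mono by metis
    then have "k \<le> d" using members[OF A_in] by simp
    then show False using False by blast
  qed
  then have "F = {}" by blast
  then show ?thesis by simp
qed

lemma mod_eq_one_if_fixes_generators:
  assumes gen: "generates n A" and fixed: "\<And>x. x \<in> A \<Longrightarrow> (b * x) mod n = x"
  shows "b mod n = 1 mod n"
proof (cases "n \<ge> 2")
  case False
  then consider "n = 0" | "n = 1" by linarith
  then show ?thesis
    by cases (use gen in \<open>auto simp: generates_def gen_subgroup_def Zn_def\<close>)
next
  case True
  then have "1 \<in> gen_subgroup n A" using gen by (simp add: generates_def Zn_def)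
  then obtain c where "1 = nat ((\<Sum>x\<in>A. c x * int x) mod int n)"
    unfolding gen_subgroup_def by auto
  then have S: "[(\<Sum>x\<in>A. c x * int x) = 1] (mod int n)"
    using True by (simp add: cong_def nat_eq_iff)
  have "[int b * (\<Sum>x\<in>A. c x * int x) = (\<Sum>x\<in>A. c x * int (b * x))] (mod int n)"
    by (simp add: sum_distrib_left algebra_simps)
  also have "[(\<Sum>x\<in>A. c x * int (b * x)) = (\<Sum>x\<in>A. c x * int x)] (mod int n)"
  proof (rule cong_sum, rule cong_scalar_left)
    fix x assume "x \<in> A"
    then have "[b * x = x] (mod n)" using fixed by (metis cong_def mod_mod_trivial)
    then show "[int (b * x) = int x] (mod int n)" by (simp only: cong_int_iff)
  qed
  finally have "[int b * 1 = 1] (mod int n)"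
    using S cong_scalar_left cong_sym cong_trans by metis
  then have "[b = 1] (mod n)" using cong_int_iff[of b 1 n] by simp
  then show ?thesis by (simp add: cong_def)
qed

definition orbit_segment :: "nat \<Rightarrow> nat \<Rightarrow> nat \<Rightarrow> nat \<Rightarrow> nat set" where
  "orbit_segment n a x k = (\<lambda>i. (a ^ i * x) mod n) ` {..<k}"

lemma orbit_segment_subset:
  assumes "smul n a A = A" and "x \<in> A" and "x < n"
  shows "orbit_segment n a x k \<subseteq> A"
proof -
  have "(a ^ i * x) mod n \<in> A" for i
  proof (induction i)
    case 0
    then show ?case using assms(2,3) by simp
  next
    case (Suc i)
    then have "(a * ((a ^ i * x) mod n)) mod n \<in> smul n a A" by (simp add: smul_def)
    then show ?case using assms(1) by (simp add: mod_mult_right_eq mult.assoc)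
  qed
  then show ?thesis by (auto simp: orbit_segment_def)
qed

lemma card_orbit_segment:
  assumes "coprime a n" and "x < n"
    and moved: "\<And>j. 0 < j \<Longrightarrow> j < k \<Longrightarrow> (a ^ j * x) mod n \<noteq> x"
  shows "card (orbit_segment n a x k) = k"
proof -
  have eq: "i = j" if "i < k" "j < k" "i \<le> j" "[a ^ i * x = a ^ j * x] (mod n)" for i j
  proof (rule ccontr)
    assume "i \<noteq> j"
    have "a ^ j = a ^ i * a ^ (j - i)" using that(3) by (simp flip: power_add)
    then have "[a ^ i * x = a ^ i * (a ^ (j - i) * x)] (mod n)"
      using that(4) by (simp add: mult.assoc)
    moreover have "coprime (a ^ i) n" using assms(1) by simp
    ultimately have "[x = a ^ (j - i) * x] (mod n)"
      using cong_mult_lcancel_nat by blast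
    moreover have "(a ^ (j - i) * x) mod n \<noteq> x"
      using moved[of "j - i"] that(2,3) \<open>i \<noteq> j\<close> by simp
    ultimately show False using \<open>x < n\<close> by (simp add: cong_def)
  qed
  have "inj_on (\<lambda>i. (a ^ i * x) mod n) {..<k}"
  proof (rule inj_onI)
    fix i j assume "i \<in> {..<k}" "j \<in> {..<k}" "(a ^ i * x) mod n = (a ^ j * x) mod n"
    then show "i = j"
      using eq[of i j] eq[of j i] by (cases "i \<le> j") (auto simp: cong_def)
  qed
  then show ?thesis by (simp add: orbit_segment_def card_image)
qed

lemma orbit_segment_in_Fix:
  assumes "a \<in> units_Zn n" and "A \<in> Fix n d a" and "x \<in> A"
    and "\<And>j. 0 < j \<Longrightarrow> j < k \<Longrightarrow> (a ^ j * x) mod n \<noteq> x"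
  shows "orbit_segment n a x k \<subseteq> A" "card (orbit_segment n a x k) = k"
proof -
  have "x < n" using assms(2,3) by (auto simp: Fix_def Y_gen_def Zn_def)
  moreover have "smul n a A = A" using assms(2) by (simp add: Fix_def)
  moreover have "coprime a n" using assms(1) by (simp add: units_Zn_def)
  ultimately show "orbit_segment n a x k \<subseteq> A" "card (orbit_segment n a x k) = k"
    using orbit_segment_subset[OF _ assms(3)] card_orbit_segment[OF _ _ assms(4)] by blast+
qed

lemma card_Fix_le_if_members_contain_orbit_segment:
  assumes "a \<in> units_Zn n" and "k \<ge> 1"
    and "\<And>A. A \<in> Fix n d a \<Longrightarrow>
           \<exists>x\<in>A. \<forall>j. 0 < j \<and> j < k \<longrightarrow> (a ^ j * x) mod n \<noteq> x"
  shows "card (Fix n d a) \<le> n ^ (d + 1 - k)"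
proof -
  have "card (Fix n d a) \<le> card (Zn n) ^ (d + 1 - k)"
  proof (rule card_family_le_pow_if_members_contain_anchored_set
      [where S = "\<lambda>x. orbit_segment n a x k"])
    fix A assume A: "A \<in> Fix n d a"
    then show "A \<subseteq> Zn n \<and> card A = d" by (simp add: Fix_def Y_gen_def)
    obtain x where "x \<in> A" "\<And>j. 0 < j \<Longrightarrow> j < k \<Longrightarrow> (a ^ j * x) mod n \<noteq> x"
      using assms(3)[OF A] by blast
    then show "\<exists>x\<in>Zn n. orbit_segment n a x k \<subseteq> A \<and> card (orbit_segment n a x k) = k"
      using orbit_segment_in_Fix[OF assms(1) A] \<open>A \<subseteq> Zn n \<and> card A = d\<close> by blast
  qed (use assms(2) in \<open>simp_all add: Zn_def\<close>)
  then show ?thesis by (simp add: Zn_def)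
qed

theorem lemma5p3:
  fixes n d a :: nat
  assumes "d \<ge> 2" and "a \<in> units_Zn n"
  shows "(a \<noteq> 1 mod n \<longrightarrow> card (Fix n d a) \<le> n ^ (d - 1))
       \<and> ((a ^ 2) mod n \<noteq> 1 mod n \<longrightarrow> card (Fix n d a) \<le> n ^ (d - 2))"
proof -
  have moved: "\<exists>x\<in>A. (b * x) mod n \<noteq> x" if "A \<in> Fix n d a" "b mod n \<noteq> 1 mod n" for A b
    using that mod_eq_one_if_fixes_generators[of n A b] by (auto simp: Fix_def Y_gen_def)
  have "card (Fix n d a) \<le> n ^ (d + 1 - 2)" if a_ne: "a \<noteq> 1 mod n"
  proof (rule card_Fix_le_if_members_contain_orbit_segment[OF assms(2)])
    fix A assume A: "A \<in> Fix n d a"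
    have "a mod n \<noteq> 1 mod n" using assms(2) a_ne by (simp add: units_Zn_def Zn_def)
    then obtain x where "x \<in> A" "(a * x) mod n \<noteq> x" using moved[OF A] by blast
    then show "\<exists>x\<in>A. \<forall>j. 0 < j \<and> j < 2 \<longrightarrow> (a ^ j * x) mod n \<noteq> x"
      by (intro bexI[of _ x]) (auto simp: less_2_cases_iff)
  qed simp
  moreover have "card (Fix n d a) \<le> n ^ (d + 1 - 3)" if a2_ne: "(a ^ 2) mod n \<noteq> 1 mod n"
  proof (rule card_Fix_le_if_members_contain_orbit_segment[OF assms(2)])
    fix A assume A: "A \<in> Fix n d a"
    obtain x where "x \<in> A" and x: "(a ^ 2 * x) mod n \<noteq> x" using moved[OF A a2_ne] by blast
    \<comment> \<open>\<open>ax \<equiv> x\<close> would force \<open>a\<^sup>2x \<equiv> x\<close>\<close>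
    moreover have "(a * x) mod n \<noteq> x"
      using x by (metis mod_mult_right_eq mult.assoc power2_eq_square)
    ultimately show "\<exists>x\<in>A. \<forall>j. 0 < j \<and> j < 3 \<longrightarrow> (a ^ j * x) mod n \<noteq> x"
      by (intro bexI[of _ x]) (auto simp: numeral_3_eq_3 less_Suc_eq numeral_2_eq_2)
  qed simp
  ultimately show ?thesis using assms(1) by simp
qed

end
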